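(* In the full-information setting, let $\beta=\frac1K$ and run Gaptron with gap map $a(\mathbf W_t,\mathbf x_t)=1-\max\{\mathbb 1[m_t^\star>\beta],\,m_t^\star\}$, learning rate $\eta=\frac{1-\beta}{KX^2}$, exploration rate $\gamma=0$, and the multiclass hinge loss $$\ell_t(\mathbf W)=\begin{cases}\max\{1-m_t(\mathbf W,y_t),0\}&\text{if } m_t^\star\le\beta,\\ \max\{1-m_t(\mathbf W,y_t),0\}&\text{if } y_t^\star\ne y_t\text{ and } m_t^\star>\beta,\\ 0&\text{if } y_t^\star=y_t\text{ and } m_t^\star>\beta.\end{cases}$$ Then for every $\mathbf U\in\mathcal W$, $$\mathbb E\Big[\sum_{t=1}^T\mathbb 1[y'_t\ne y_t]\Big]\le\sum_{t=1}^T\ell_t(\mathbf U)+\frac{K^2X^2\|\mathbf U\|^2}{2(K-1)}.$$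
   Context: Setting and notation. Fix integers $K\ge 2$, $d\ge1$, $T\ge1$ and reals $X>0$, $D>0$. Matrices $\mathbf W\in\mathbb{R}^{K\times d}$ have rows $\mathbf W^1,\dots,\mathbf W^K\in\mathbb{R}^d$ and are identified with vectors in $\mathbb{R}^{Kd}$; $\langle\cdot,\cdot\rangle$ is the Euclidean inner product and $\|\cdot\|$ the Euclidean (Frobenius) norm. $\mathcal W=\{\mathbf W:\|\mathbf W\|\le D\}$. $\mathbf e_k$ is the $k$-th standard basis vector of $\mathbb R^K$ and $\mathbf 1\in\mathbb R^K$ the all-ones vector. In each round $t=1,\dots,T$ the environment chooses a label $y_t\in\{1,\dots,K\}$ and a feature vector $\mathbf x_t\in\mathbb R^d$ with $\|\mathbf x_t\|\le X$ (possibly depending on the learner's past predictions $y'_1,\dots,y'_{t-1}$ but not on its current random draw); the learner sees $\mathbf x_t$, outputs a random label $y'_t$, and then observes $y_t$ (full-information setting) or only $\mathbb 1[y'_t\ne y_t]$ (bandit setting). Gaptron, with learning rate $\eta>0$, exploration rate $\gamma\in[0,1]$, gap map $a:\mathbb R^{K\times d}\times\mathbb R^d\to[0,1]$ and loss functions $\ell_t$: set $\mathbf W_1=\mathbf 0$; for $t=1,\dots,T$: let $y_t^\star=\arg\max_k\langle \mathbf W_t^k,\mathbf x_t\rangle$ (ties broken arbitrarily), $a_t=a(\mathbf W_t,\mathbf x_t)$, $\mathbf p'_t=(1-\max\{a_t,\gamma\})\mathbf e_{y_t^\star}+\max\{a_t,\gamma\}\frac1K\mathbf 1$; draw $y'_t\sim\mathbf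 p'_t$ ($p'_t(k)$ denotes the probability of label $k$); set $\mathbf g_t=\nabla\ell_t(\mathbf W_t)$; update $\mathbf W_{t+1}=\arg\min_{\mathbf W\in\mathcal W}\ \eta\langle\mathbf g_t,\mathbf W\rangle+\frac12\|\mathbf W-\mathbf W_t\|^2$. $\mathbb E$ denotes expectation over the learner's randomization. Margins: $m_t(\mathbf W,y)=\langle\mathbf W^y,\mathbf x_t\rangle-\max_{k\ne y}\langle\mathbf W^k,\mathbf x_t\rangle$ and $m_t^\star=\max_k m_t(\mathbf W_t,k)$, where $\mathbf W_t$ is Gaptron's current iterate; in the definition of $\ell_t$ the case distinction uses $y_t^\star$ and $m_t^\star$ computed from $\mathbf W_t$, so $\ell_t$ is, as a function of $\mathbf W$, either $\max\{1-m_t(\mathbf W,y_t),0\}$ or identically $0$. The gradient used is $\mathbf g_t=(\mathbf e_{\tilde k}-\mathbf e_{y_t})\otimes\mathbf x_t$ with $\tilde k=\arg\max_{k\ne y_t}\langle\mathbf W_t^k,\mathbf x_t\rangle$ in the first two cases and $\mathbf g_t=\mathbf 0$ in the third, where $\mathbf v\otimes\mathbf x$ is the $K\times d$ matrix with rows $v_k\mathbf x$. *)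

theory Defs
  imports "HOL-Analysis.Analysis"
begin

text \<open>Labels form a finite type 'k (K = CARD('k)), features live in real^'d.
  A weight matrix W has rows W$k :: real^'d; the norm and inner product on
  real^'d^'k are the Frobenius ones.\<close>

type_synonym ('d,'k) mat = "real ^ 'd ^ 'k"

definition score :: "('d::finite,'k::finite) mat \<Rightarrow> real^'d \<Rightarrow> 'k \<Rightarrow> real" where
  "score W x k = inner (W $ k) x"

definition margin :: "('d::finite,'k::finite) mat \<Rightarrow> real^'d \<Rightarrow> 'k \<Rightarrow> real" where
  "margin W x y = score W x y - Max ((score W x) ` {k. k \<noteq> y})"

definition max_margin :: "('d::finite,'k::finite) mat \<Rightarrow> real^'d \<Rightarrow> real" where
  "max_margin W x = Max ((margin W x) ` UNIV)"

definition valid_ystar :: "(('d::finite,'k::finite) mat \<Rightarrow> real^'d \<Rightarrow> 'k) \<Rightarrow> bool" where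
  "valid_ystar ys \<longleftrightarrow> (\<forall>W x k. score W x k \<le> score W x (ys W x))"

definition valid_ktil :: "(('d::finite,'k::finite) mat \<Rightarrow> real^'d \<Rightarrow> 'k \<Rightarrow> 'k) \<Rightarrow> bool" where
  "valid_ktil kt \<longleftrightarrow> (\<forall>W x y. kt W x y \<noteq> y \<and> (\<forall>k. k \<noteq> y \<longrightarrow> score W x k \<le> score W x (kt W x y)))"

definition pred_prob :: "(('d::finite,'k::finite) mat \<Rightarrow> real^'d \<Rightarrow> 'k) \<Rightarrow>
    (('d,'k) mat \<Rightarrow> real^'d \<Rightarrow> real) \<Rightarrow> real \<Rightarrow> ('d,'k) mat \<Rightarrow> real^'d \<Rightarrow> 'k \<Rightarrow> real" where
  "pred_prob ys a \<gamma> W x k =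
     (1 - max (a W x) \<gamma>) * (if k = ys W x then 1 else 0) + max (a W x) \<gamma> / real CARD('k)"

definition gaptron_update :: "real \<Rightarrow> real \<Rightarrow> ('d::finite,'k::finite) mat \<Rightarrow> ('d,'k) mat \<Rightarrow> ('d,'k) mat" where
  "gaptron_update D \<eta> g Wt =
     (SOME W. norm W \<le> D \<and> (\<forall>V. norm V \<le> D \<longrightarrow>
        \<eta> * inner g W + (1/2) * (norm (W - Wt))\<^sup>2 \<le> \<eta> * inner g V + (1/2) * (norm (V - Wt))\<^sup>2))"

text \<open>Expected value (over the learner's randomization) of a sum over n rounds of a
  per-round quantity f W_t x_t y_t y'_t, for an adaptive environment env mapping the
  history of the learner's past predictions to (y_t, x_t). grad W x y is the gradient
  g_t used in the update.\<close>
fun gaptron_exp ::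
  "real \<Rightarrow> real \<Rightarrow> real \<Rightarrow> (('d::finite,'k::finite) mat \<Rightarrow> real^'d \<Rightarrow> 'k) \<Rightarrow>
   (('d,'k) mat \<Rightarrow> real^'d \<Rightarrow> real) \<Rightarrow>
   (('d,'k) mat \<Rightarrow> real^'d \<Rightarrow> 'k \<Rightarrow> ('d,'k) mat) \<Rightarrow>
   ('k list \<Rightarrow> 'k \<times> (real^'d)) \<Rightarrow>
   (('d,'k) mat \<Rightarrow> real^'d \<Rightarrow> 'k \<Rightarrow> 'k \<Rightarrow> real) \<Rightarrow>
   nat \<Rightarrow> 'k list \<Rightarrow> ('d,'k) mat \<Rightarrow> real" where
  "gaptron_exp D \<eta> \<gamma> ys a grad env f 0 h W = 0"
| "gaptron_exp D \<eta> \<gamma> ys a grad env f (Suc n) h W =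
     (let y = fst (env h); x = snd (env h);
          W' = gaptron_update D \<eta> (grad W x y) W
      in \<Sum>k\<in>UNIV. pred_prob ys a \<gamma> W x k *
            (f W x y k + gaptron_exp D \<eta> \<gamma> ys a grad env f n (h @ [k]) W'))"

definition gap_map :: "real \<Rightarrow> ('d::finite,'k::finite) mat \<Rightarrow> real^'d \<Rightarrow> real" where
  "gap_map \<beta> W x = 1 - max (if max_margin W x > \<beta> then 1 else 0) (max_margin W x)"

definition hinge_loss_t :: "(('d::finite,'k::finite) mat \<Rightarrow> real^'d \<Rightarrow> 'k) \<Rightarrow> real \<Rightarrow>
    ('d,'k) mat \<Rightarrow> real^'d \<Rightarrow> 'k \<Rightarrow> ('d,'k) mat \<Rightarrow> real" where
  "hinge_loss_t ys \<beta> Wt x y U =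
     (if ys Wt x = y \<and> max_margin Wt x > \<beta> then 0 else max (1 - margin U x y) 0)"

definition hinge_grad :: "(('d::finite,'k::finite) mat \<Rightarrow> real^'d \<Rightarrow> 'k) \<Rightarrow>
    (('d,'k) mat \<Rightarrow> real^'d \<Rightarrow> 'k \<Rightarrow> 'k) \<Rightarrow> real \<Rightarrow>
    ('d,'k) mat \<Rightarrow> real^'d \<Rightarrow> 'k \<Rightarrow> ('d,'k) mat" where
  "hinge_grad ys kt \<beta> Wt x y =
     (if ys Wt x = y \<and> max_margin Wt x > \<beta> then 0
      else (\<chi> k. (if k = kt Wt x y then x else 0) - (if k = y then x else 0)))"

end

theory Submission
  imports Defs
begin

(* A potential argument with Phi(W) = |W - U|^2 / (2 eta).  The update is the Euclidean
   projection of the gradient step W_t - eta g_t onto the ball, and projections are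
   non-expansive, so Phi(W_{t+1}) <= Phi(W_t) - <g_t, W_t - U> + eta |g_t|^2 / 2.  When the loss
   is active, <g_t, W_t - U> >= 1 - m_t(W_t, y_t) - l_t(U) and eta |g_t|^2 / 2 <= eta X^2 =
   (1 - beta) beta; the gap map is tuned exactly so that the expected number of mistakes is
   then at most 1 - m_t(W_t, y_t) - (1 - beta) beta, while it is 0 when the loss is switched
   off.  Hence E[mistake_t] + Phi(W_{t+1}) <= l_t(U) + Phi(W_t), and summing over the rounds
   leaves Phi(0) = K^2 X^2 |U|^2 / (2 (K - 1)). *)

lemma gaptron_update_eq_closest_point:
  "gaptron_update D \<eta> g Wt = closest_point (cball 0 D) (Wt - \<eta> *\<^sub>R g)"
proof -
  define z where "z = Wt - \<eta> *\<^sub>R g"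
  have objective: "\<eta> * inner g W + (1/2) * (norm (W - Wt))\<^sup>2 =
      (1/2) * (norm (W - z))\<^sup>2 + (\<eta> * inner g Wt - \<eta>\<^sup>2/2 * (norm g)\<^sup>2)" for W
    unfolding z_def power2_norm_eq_inner
    by (simp add: inner_commute algebra_simps power2_eq_square)
  have compare: "\<eta> * inner g W + (1/2) * (norm (W - Wt))\<^sup>2 \<le> \<eta> * inner g V + (1/2) * (norm (V - Wt))\<^sup>2
      \<longleftrightarrow> dist z W \<le> dist z V" for W V
    unfolding objective dist_norm by (simp add: norm_minus_commute power2_le_iff_abs_le)
  show ?thesis
    unfolding gaptron_update_def closest_point_def z_def[symmetric] compare by (simp add: Ball_def)
qed

lemma gaptron_update_dist_le:
  fixes U :: "('d::finite,'k::finite) mat"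
  assumes "norm U \<le> D"
  shows "dist (gaptron_update D \<eta> g Wt) U \<le> dist (Wt - \<eta> *\<^sub>R g) U"
proof -
  have U_in: "U \<in> cball 0 D" using assms by simp
  then have "closest_point (cball 0 D) U = U" by (rule closest_point_self)
  moreover have "cball (0::('d,'k) mat) D \<noteq> {}" using U_in by blast
  ultimately show ?thesis
    using closest_point_lipschitz[of "cball 0 D" "Wt - \<eta> *\<^sub>R g" U]
    by (simp add: gaptron_update_eq_closest_point)
qed

lemma gaptron_update_potential_le:
  fixes U :: "('d::finite,'k::finite) mat"
  assumes U: "norm U \<le> D" and \<eta>0: "\<eta> > 0"
  shows "(dist (gaptron_update D \<eta> g W) U)\<^sup>2 / (2 * \<eta>)
           \<le> (dist W U)\<^sup>2 / (2 * \<eta>) - inner g (W - U) + \<eta> / 2 * (norm g)\<^sup>2"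
proof -
  have "(dist (gaptron_update D \<eta> g W) U)\<^sup>2 \<le> (norm (W - \<eta> *\<^sub>R g - U))\<^sup>2"
    using gaptron_update_dist_le[OF U, of \<eta> g W] by (simp add: dist_norm power_mono)
  also have "\<dots> = (dist W U)\<^sup>2 - 2 * \<eta> * inner g (W - U) + \<eta>\<^sup>2 * (norm g)\<^sup>2"
    unfolding dist_norm power2_norm_eq_inner
    by (simp add: inner_commute algebra_simps power2_eq_square)
  finally have "(dist (gaptron_update D \<eta> g W) U)\<^sup>2 / (2 * \<eta>)
      \<le> ((dist W U)\<^sup>2 - 2 * \<eta> * inner g (W - U) + \<eta>\<^sup>2 * (norm g)\<^sup>2) / (2 * \<eta>)"
    using \<eta>0 by (intro divide_right_mono) auto
  also have "\<dots> = (dist W U)\<^sup>2 / (2 * \<eta>) - inner g (W - U) + \<eta> / 2 * (norm g)\<^sup>2"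
    using \<eta>0 by (simp add: diff_divide_distrib add_divide_distrib power2_eq_square)
  finally show ?thesis .
qed

lemma margin_le_max_margin:
  fixes W :: "('d::finite,'k::finite) mat"
  shows "margin W x y \<le> max_margin W x"
  unfolding max_margin_def by (rule Max_ge) auto

lemma margin_le_score_diff:
  fixes W :: "('d::finite,'k::finite) mat"
  assumes "k \<noteq> y"
  shows "margin W x y \<le> score W x y - score W x k"
proof -
  have "score W x k \<le> Max (score W x ` {j. j \<noteq> y})"
    using assms by (intro Max_ge) auto
  then show ?thesis unfolding margin_def by simp
qed

lemma margin_eq_score_diff_ktil:
  fixes W :: "('d::finite,'k::finite) mat"
  assumes "valid_ktil kt"
  shows "margin W x y = score W x y - score W x (kt W x y)"
proof -
  have "Max (score W x ` {j. j \<noteq> y}) = score W x (kt W x y)"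
    using assms unfolding valid_ktil_def by (intro Max_eqI) auto
  then show ?thesis unfolding margin_def by simp
qed

lemma max_margin_nonneg:
  fixes W :: "('d::finite,'k::finite) mat" and ys :: "('d,'k) mat \<Rightarrow> real^'d \<Rightarrow> 'k"
  assumes "valid_ystar ys" and "CARD('k) \<ge> 2"
  shows "0 \<le> max_margin W x"
proof -
  have "{j. j \<noteq> ys W x} \<noteq> {}"
  proof
    assume "{j. j \<noteq> ys W x} = {}"
    then have "(UNIV :: 'k set) = {ys W x}" by auto
    then have "CARD('k) = card {ys W x}" by (rule arg_cong)
    with assms(2) show False by simp
  qed
  then have "Max (score W x ` {j. j \<noteq> ys W x}) \<le> score W x (ys W x)"
    using assms(1) unfolding valid_ystar_def by (subst Max_le_iff) auto
  then have "0 \<le> margin W x (ys W x)" unfolding margin_def by simp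
  also have "\<dots> \<le> max_margin W x" by (rule margin_le_max_margin)
  finally show ?thesis .
qed

lemma margin_le_neg_max_margin:
  fixes W :: "('d::finite,'k::finite) mat" and ys :: "('d,'k) mat \<Rightarrow> real^'d \<Rightarrow> 'k"
  assumes ys: "valid_ystar ys" and y: "y \<noteq> ys W x"
  shows "margin W x y \<le> - max_margin W x"
proof -
  define s z where "s = score W x" and "z = ys W x"
  have s_le: "s k \<le> s z" for k using ys unfolding valid_ystar_def s_def z_def by blast
  have "margin W x k \<le> s z - s y" for k
  proof (cases "k = z")
    case True
    then show ?thesis using margin_le_score_diff[of y k] y unfolding s_def z_def by simp
  next
    case False
    then have "margin W x k \<le> s k - s z" using margin_le_score_diff[of z k] unfolding s_def by simp
    then show ?thesis using s_le[of k] s_le[of y] by linarith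
  qed
  then have "max_margin W x \<le> s z - s y" unfolding max_margin_def by simp
  moreover have "margin W x y \<le> s y - s z"
    using margin_le_score_diff[of z y] y unfolding s_def z_def by simp
  ultimately show ?thesis by linarith
qed

lemma inner_hinge_direction:
  fixes V :: "('d::finite,'k::finite) mat"
  shows "inner (\<chi> k. (if k = j then x else 0) - (if k = y then x else 0)) V
           = score V x j - score V x y"
proof -
  have "inner (\<chi> k. (if k = j then x else 0) - (if k = y then x else 0)) V
      = (\<Sum>k\<in>UNIV. (if k = j then inner x (V $ k) else 0) - (if k = y then inner x (V $ k) else 0))"
    unfolding inner_vec_def[where 'a="real^'d" and 'b='k] by (intro sum.cong) (auto simp: inner_diff_left)
  also have "\<dots> = inner x (V $ j) - inner x (V $ y)"
    by (simp add: sum_subtractf)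
  finally show ?thesis by (simp add: score_def inner_commute)
qed

lemma hinge_grad_active:
  assumes "\<not> (ys W x = y \<and> max_margin W x > \<beta>)"
  shows "hinge_grad ys kt \<beta> W x y
           = (\<chi> k. (if k = kt W x y then x else 0) - (if k = y then x else 0))"
  unfolding hinge_grad_def by (rule if_not_P[OF assms])

lemma norm_hinge_grad:
  fixes W :: "('d::finite,'k::finite) mat"
  assumes "valid_ktil kt" and "\<not> (ys W x = y \<and> max_margin W x > \<beta>)"
  shows "(norm (hinge_grad ys kt \<beta> W x y))\<^sup>2 = 2 * (norm x)\<^sup>2"
proof -
  define g where "g = hinge_grad ys kt \<beta> W x y"
  have g: "g = (\<chi> k. (if k = kt W x y then x else 0) - (if k = y then x else 0))"
    unfolding g_def by (rule hinge_grad_active[of ys W x y \<beta> kt, OF assms(2)])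
  have "kt W x y \<noteq> y" using assms(1) unfolding valid_ktil_def by blast
  then have "score g x (kt W x y) = inner x x" "score g x y = - inner x x"
    by (simp_all add: g score_def)
  moreover have "(norm g)\<^sup>2 = score g x (kt W x y) - score g x y"
    unfolding power2_norm_eq_inner by (subst (1) g) (rule inner_hinge_direction)
  ultimately show ?thesis by (simp add: g_def power2_norm_eq_inner)
qed

lemma sum_pred_prob: "(\<Sum>k\<in>UNIV. pred_prob ys a \<gamma> W x k) = 1"
  by (simp add: pred_prob_def sum.distrib flip: sum_distrib_left)

lemma pred_prob_nonneg:
  assumes "0 \<le> max (a W x) \<gamma>" and "max (a W x) \<gamma> \<le> 1"
  shows "0 \<le> pred_prob ys a \<gamma> W x k"
  using assms by (simp add: pred_prob_def)

lemma expected_mistakes_pred_prob: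
  fixes ys :: "('d::finite,'k::finite) mat \<Rightarrow> real^'d \<Rightarrow> 'k"
  shows "(\<Sum>k\<in>UNIV. pred_prob ys a \<gamma> W x k * (if k \<noteq> y then 1 else 0))
    = (1 - max (a W x) \<gamma>) * (if ys W x \<noteq> y then 1 else 0) + max (a W x) \<gamma> * (1 - 1 / real CARD('k))"
proof -
  define p where "p = pred_prob ys a \<gamma> W x"
  have "(\<Sum>k\<in>UNIV. p k * (if k \<noteq> y then 1 else 0)) = (\<Sum>k\<in>UNIV. p k - (if k = y then p y else 0))"
    by (intro sum.cong) auto
  also have "\<dots> = 1 - p y"
    by (simp add: sum_subtractf sum_pred_prob p_def)
  also have "\<dots> = (1 - max (a W x) \<gamma>) * (if ys W x \<noteq> y then 1 else 0) + max (a W x) \<gamma> * (1 - 1 / real CARD('k))"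
    by (cases "ys W x = y") (simp_all add: p_def pred_prob_def algebra_simps)
  finally show ?thesis unfolding p_def .
qed

lemma max_gap_map_0:
  fixes W :: "('d::finite,'k::finite) mat"
  assumes "0 \<le> max_margin W x" and "\<beta> \<le> 1"
  shows "max (gap_map \<beta> W x) 0 = (if max_margin W x > \<beta> then 0 else 1 - max_margin W x)"
  using assms by (auto simp: gap_map_def)

lemma gap_expected_mistakes_le:
  fixes W :: "('d::finite,'k::finite) mat" and ys :: "('d,'k) mat \<Rightarrow> real^'d \<Rightarrow> 'k"
  assumes K: "CARD('k) \<ge> 2" and ys: "valid_ystar ys" and \<beta>: "\<beta> = 1 / real CARD('k)"
    and active: "\<not> (ys W x = y \<and> max_margin W x > \<beta>)"
  shows "(\<Sum>k\<in>UNIV. pred_prob ys (gap_map \<beta>) 0 W x k * (if k \<noteq> y then 1 else 0))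
           \<le> 1 - margin W x y - (1 - \<beta>) * \<beta>"
proof -
  define m where "m = max_margin W x"
  have m0: "0 \<le> m" unfolding m_def using max_margin_nonneg[OF ys K] .
  have \<beta>0: "0 < \<beta>" and \<beta>1: "\<beta> \<le> 1" using K by (auto simp: \<beta>)
  have mistakes: "(\<Sum>k\<in>UNIV. pred_prob ys (gap_map \<beta>) 0 W x k * (if k \<noteq> y then 1 else 0))
      = (if m > \<beta> then 1 else m) * (if ys W x \<noteq> y then 1 else 0)
        + (if m > \<beta> then 0 else (1 - m) * (1 - \<beta>))"
    using max_gap_map_0[OF m0[unfolded m_def] \<beta>1]
    by (simp add: expected_mistakes_pred_prob m_def flip: \<beta>)
  consider (far) "m > \<beta>" "ys W x \<noteq> y" | (near_right) "m \<le> \<beta>" "ys W x = y"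
    | (near_wrong) "m \<le> \<beta>" "ys W x \<noteq> y"
    using active m_def by fastforce
  then show ?thesis
  proof cases
    case far
    have "margin W x y \<le> - m" using margin_le_neg_max_margin[OF ys] far(2) m_def by metis
    with far show ?thesis unfolding mistakes
      by (simp add: algebra_simps) (use zero_le_square[of \<beta>] in linarith)
  next
    case near_right
    have "margin W x y \<le> m" unfolding m_def by (rule margin_le_max_margin)
    moreover have "m * \<beta> \<le> \<beta> * \<beta>" using near_right \<beta>0 by (intro mult_right_mono) auto
    ultimately show ?thesis using near_right unfolding mistakes by (simp add: algebra_simps)
  next
    case near_wrong
    have "margin W x y \<le> - m" using margin_le_neg_max_margin[OF ys] near_wrong(2) m_def by metis
    moreover have "m * \<beta> \<le> m" using m0 \<beta>1 by (simp add: mult_left_le)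
    ultimately show ?thesis using near_wrong unfolding mistakes
      by (simp add: algebra_simps) (use zero_le_square[of \<beta>] in linarith)
  qed
qed

lemma gaptron_round_bound:
  fixes ys :: "('d::finite,'k::finite) mat \<Rightarrow> real^'d \<Rightarrow> 'k"
    and kt :: "('d,'k) mat \<Rightarrow> real^'d \<Rightarrow> 'k \<Rightarrow> 'k"
    and W U :: "('d,'k) mat"
  assumes K: "CARD('k) \<ge> 2" and X: "X > 0" "norm x \<le> X" and U: "norm U \<le> D"
    and ys: "valid_ystar ys" and kt: "valid_ktil kt"
    and \<beta>: "\<beta> = 1 / real CARD('k)" and \<eta>: "\<eta> = (1 - \<beta>) / (real CARD('k) * X\<^sup>2)"
  shows "(\<Sum>k\<in>UNIV. pred_prob ys (gap_map \<beta>) 0 W x k * (if k \<noteq> y then 1 else 0))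
           + (dist (gaptron_update D \<eta> (hinge_grad ys kt \<beta> W x y) W) U)\<^sup>2 / (2 * \<eta>)
         \<le> hinge_loss_t ys \<beta> W x y U + (dist W U)\<^sup>2 / (2 * \<eta>)"
proof -
  define g where "g = hinge_grad ys kt \<beta> W x y"
  define mistakes where
    "mistakes = (\<Sum>k\<in>UNIV. pred_prob ys (gap_map \<beta>) 0 W x k * (if k \<noteq> y then 1 else 0))"
  have \<eta>0: "\<eta> > 0" and \<eta>X: "\<eta> * X\<^sup>2 = (1 - \<beta>) * \<beta>"
    using K X by (auto simp: \<eta> \<beta> field_simps)
  have descent: "(dist (gaptron_update D \<eta> g W) U)\<^sup>2 / (2 * \<eta>)
      \<le> (dist W U)\<^sup>2 / (2 * \<eta>) - inner g (W - U) + \<eta> / 2 * (norm g)\<^sup>2"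
    using U \<eta>0 by (rule gaptron_update_potential_le)
  have "mistakes \<le> hinge_loss_t ys \<beta> W x y U + inner g (W - U) - \<eta> / 2 * (norm g)\<^sup>2"
  proof (cases "ys W x = y \<and> max_margin W x > \<beta>")
    case True
    then have "max (gap_map \<beta> W x) 0 = 0" by (simp add: gap_map_def)
    with True show ?thesis
      by (simp add: mistakes_def expected_mistakes_pred_prob g_def hinge_grad_def hinge_loss_t_def)
  next
    case active: False
    have "mistakes \<le> 1 - margin W x y - (1 - \<beta>) * \<beta>"
      unfolding mistakes_def by (rule gap_expected_mistakes_le[OF K ys \<beta> active])
    moreover have "\<eta> / 2 * (norm g)\<^sup>2 \<le> (1 - \<beta>) * \<beta>"
    proof -
      have "\<eta> * (norm x)\<^sup>2 \<le> \<eta> * X\<^sup>2" using X \<eta>0 by (intro mult_left_mono power_mono) auto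
      then show ?thesis using norm_hinge_grad[of kt ys W x y \<beta>, OF kt active] \<eta>X by (simp add: g_def)
    qed
    moreover have "inner g (W - U) = score U x y - score U x (kt W x y) - margin W x y"
      by (simp add: g_def hinge_grad_active[of ys W x y \<beta> kt, OF active] inner_hinge_direction
          margin_eq_score_diff_ktil[OF kt] score_def inner_diff_left)
    moreover have "margin U x y \<le> score U x y - score U x (kt W x y)"
      using kt unfolding valid_ktil_def by (intro margin_le_score_diff) blast
    moreover have "1 - margin U x y \<le> hinge_loss_t ys \<beta> W x y U"
      unfolding hinge_loss_t_def if_not_P[OF active] by simp
    ultimately show ?thesis by linarith
  qed
  with descent show ?thesis unfolding mistakes_def g_def by linarith
qed

lemma gaptron_exp_potential_bound:
  fixes \<Phi> :: "('d::finite,'k::finite) mat \<Rightarrow> real"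
  assumes a: "\<And>W x. 0 \<le> max (a W x) \<gamma>" "\<And>W x. max (a W x) \<gamma> \<le> 1"
    and \<Phi>: "\<And>W. 0 \<le> \<Phi> W"
    and round: "\<And>W y x. (y, x) \<in> range env \<Longrightarrow>
      (\<Sum>k\<in>UNIV. pred_prob ys a \<gamma> W x k * f W x y k) + \<Phi> (gaptron_update D \<eta> (grad W x y) W)
        \<le> (\<Sum>k\<in>UNIV. pred_prob ys a \<gamma> W x k * f' W x y k) + \<Phi> W"
  shows "gaptron_exp D \<eta> \<gamma> ys a grad env f n h W
           \<le> gaptron_exp D \<eta> \<gamma> ys a grad env f' n h W + \<Phi> W"
proof (induction n arbitrary: h W)
  case 0
  show ?case using \<Phi> by simp
next
  case (Suc n)
  obtain y x where yx: "env h = (y, x)" by fastforce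
  define W' where "W' = gaptron_update D \<eta> (grad W x y) W"
  define p where "p = pred_prob ys a \<gamma> W x"
  define G G' where "G k = gaptron_exp D \<eta> \<gamma> ys a grad env f n (h @ [k]) W'"
    and "G' k = gaptron_exp D \<eta> \<gamma> ys a grad env f' n (h @ [k]) W'" for k
  have p0: "0 \<le> p k" for k unfolding p_def using a by (rule pred_prob_nonneg)
  have p1: "(\<Sum>k\<in>UNIV. p k) = 1" unfolding p_def by (rule sum_pred_prob)
  have "(y, x) \<in> range env" using yx by (metis rangeI)
  then have round_h: "(\<Sum>k\<in>UNIV. p k * f W x y k) + \<Phi> W' \<le> (\<Sum>k\<in>UNIV. p k * f' W x y k) + \<Phi> W"
    unfolding p_def W'_def by (rule round)
  have "gaptron_exp D \<eta> \<gamma> ys a grad env f (Suc n) h W = (\<Sum>k\<in>UNIV. p k * (f W x y k + G k))"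
    by (simp add: yx p_def G_def W'_def)
  also have "\<dots> \<le> (\<Sum>k\<in>UNIV. p k * (f W x y k + (G' k + \<Phi> W')))"
    unfolding G_def G'_def using Suc.IH p0 by (intro sum_mono mult_left_mono add_left_mono) auto
  also have "\<dots> = (\<Sum>k\<in>UNIV. p k * f W x y k) + \<Phi> W' + (\<Sum>k\<in>UNIV. p k * G' k)"
    by (simp add: distrib_left sum.distrib p1 flip: sum_distrib_right)
  also have "\<dots> \<le> (\<Sum>k\<in>UNIV. p k * f' W x y k) + (\<Sum>k\<in>UNIV. p k * G' k) + \<Phi> W"
    using round_h by linarith
  also have "\<dots> = gaptron_exp D \<eta> \<gamma> ys a grad env f' (Suc n) h W + \<Phi> W"
    by (simp add: yx p_def G'_def W'_def distrib_left sum.distrib)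
  finally show ?case .
qed

theorem theorem2:
  fixes ys :: "('d::finite,'k::finite) mat \<Rightarrow> real^'d \<Rightarrow> 'k"
    and kt :: "('d,'k) mat \<Rightarrow> real^'d \<Rightarrow> 'k \<Rightarrow> 'k"
    and env :: "'k list \<Rightarrow> 'k \<times> (real^'d)"
    and X D :: real and T :: nat and U :: "('d,'k) mat"
  assumes "CARD('k) \<ge> 2" and "X > 0" and "D > 0" and "T \<ge> 1"
    and "valid_ystar ys" and "valid_ktil kt"
    and "\<forall>h. norm (snd (env h)) \<le> X"
    and "norm U \<le> D"
  shows "(let K = real CARD('k); \<beta> = 1 / K; \<eta> = (1 - \<beta>) / (K * X\<^sup>2);
              grad = hinge_grad ys kt \<beta>; a = gap_map \<beta>
          in gaptron_exp D \<eta> 0 ys a grad env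
               (\<lambda>W x y k. if k \<noteq> y then 1 else 0) T [] 0
             \<le> gaptron_exp D \<eta> 0 ys a grad env
               (\<lambda>W x y k. hinge_loss_t ys \<beta> W x y U) T [] 0
               + K\<^sup>2 * X\<^sup>2 * (norm U)\<^sup>2 / (2 * (K - 1)))"
proof -
  define K where "K = real CARD('k)"
  define \<beta> where "\<beta> = 1 / K"
  define \<eta> where "\<eta> = (1 - \<beta>) / (K * X\<^sup>2)"
  have K: "K \<ge> 2" using assms(1) by (simp add: K_def)
  then have \<eta>0: "\<eta> > 0" using assms(2) by (simp add: \<eta>_def \<beta>_def field_simps)
  have "gaptron_exp D \<eta> 0 ys (gap_map \<beta>) (hinge_grad ys kt \<beta>) env
          (\<lambda>W x y k. if k \<noteq> y then 1 else 0) T [] 0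
        \<le> gaptron_exp D \<eta> 0 ys (gap_map \<beta>) (hinge_grad ys kt \<beta>) env
          (\<lambda>W x y k. hinge_loss_t ys \<beta> W x y U) T [] 0 + (dist 0 U)\<^sup>2 / (2 * \<eta>)"
  proof (rule gaptron_exp_potential_bound[where \<Phi> = "\<lambda>W. (dist W U)\<^sup>2 / (2 * \<eta>)"])
    show "0 \<le> max (gap_map \<beta> W x) 0" "max (gap_map \<beta> W x) 0 \<le> 1" for W :: "('d,'k) mat" and x
      by (auto simp: gap_map_def)
    show "0 \<le> (dist W U)\<^sup>2 / (2 * \<eta>)" for W using \<eta>0 by simp
    fix W y x assume "(y, x) \<in> range env"
    then obtain h where "env h = (y, x)" by (metis rangeE)
    then have "norm x \<le> X" using assms(7) by (metis snd_conv)
    from gaptron_round_bound[OF assms(1,2) this assms(8,5,6), of \<beta> \<eta> W y]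
    show "(\<Sum>k\<in>UNIV. pred_prob ys (gap_map \<beta>) 0 W x k * (if k \<noteq> y then 1 else 0))
        + (dist (gaptron_update D \<eta> (hinge_grad ys kt \<beta> W x y) W) U)\<^sup>2 / (2 * \<eta>)
      \<le> (\<Sum>k\<in>UNIV. pred_prob ys (gap_map \<beta>) 0 W x k * hinge_loss_t ys \<beta> W x y U)
        + (dist W U)\<^sup>2 / (2 * \<eta>)"
      by (simp add: \<beta>_def \<eta>_def K_def sum_pred_prob flip: sum_distrib_right)
  qed
  moreover have "(dist 0 U)\<^sup>2 / (2 * \<eta>) = K\<^sup>2 * X\<^sup>2 * (norm U)\<^sup>2 / (2 * (K - 1))"
    using K assms(2) by (simp add: \<eta>_def \<beta>_def field_simps power2_eq_square)
  ultimately show ?thesis unfolding Let_def K_def[symmetric] \<beta>_def[symmetric] \<eta>_def[symmetric]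
    by simp
qed

end
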